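(* Let $(\mathcal I,T)$ be of class $\mathcal{DRI}$, and let $\eta_n=\sup\{|g'(x)|:g\in\mathcal G^n,x\in\mathcal I\}$. (a) If $b'(0)>-1$, then $\eta_1<1$. If $b'(0)=-1$, then $\eta_1=1$ and $\eta_2<1$. (b) For all $n\ge2$, $$\eta_n\le\underline\eta_2^{\,1+\lfloor(n-2)/2\rfloor},\qquad\text{where }\underline\eta_2=\min(\eta_1^2,\eta_2)<1.$$
   Context: Let $\mathcal I=[0,1]$. A binary dynamical system is given by $c\in]0,1[$ and two $C^2$ bijections, $a:[0,1]\to[0,c]$ and $b:[0,1]\to[c,1]$. The map $T$ equals $a^{-1}$ on $]0,c[$ and $b^{-1}$ on $]c,1[$. Class $\mathcal{DR}$: $a$ is increasing, $b$ is decreasing, $a(0)=0$, $a(1)=c$, $b(0)=1$, $b(1)=c$, $a'>0$ and $b'<0$ on $[0,1]$, and $a'(x)<1$, $b'(x)>-1$ for $x\in]0,1]$. Class $\mathcal{DRI}$: class $\mathcal{DR}$ with moreover $a'(0)=1$. The block inverse branches are $g_m=a^{m-1}\circ b$ for $m\ge1$. $\mathcal G^n$ is the set of compositions $g_{m_1}\circ\cdots\circ g_{m_n}$ with $m_i\ge1$. *)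

theory Defs
  imports "HOL-Analysis.Analysis"
begin

definition D :: "(real \<Rightarrow> real) \<Rightarrow> real \<Rightarrow> real" where
  "D f x = vector_derivative f (at x within {0..1})"

definition C2_on_unit :: "(real \<Rightarrow> real) \<Rightarrow> bool" where
  "C2_on_unit f \<longleftrightarrow>
     (\<forall>x\<in>{0..1}. (f has_real_derivative D f x) (at x within {0..1})) \<and>
     (\<forall>x\<in>{0..1}. (D f has_real_derivative D (D f) x) (at x within {0..1})) \<and>
     continuous_on {0..1} (D (D f))"

definition binary_system :: "real \<Rightarrow> (real \<Rightarrow> real) \<Rightarrow> (real \<Rightarrow> real) \<Rightarrow> bool" where
  "binary_system c a b \<longleftrightarrow> 0 < c \<and> c < 1 \<and>
     bij_betw a {0..1} {0..c} \<and> bij_betw b {0..1} {c..1} \<and> C2_on_unit a \<and> C2_on_unit b"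

definition class_DR :: "real \<Rightarrow> (real \<Rightarrow> real) \<Rightarrow> (real \<Rightarrow> real) \<Rightarrow> bool" where
  "class_DR c a b \<longleftrightarrow> binary_system c a b \<and>
     mono_on {0..1} a \<and> antimono_on {0..1} b \<and>
     a 0 = 0 \<and> a 1 = c \<and> b 0 = 1 \<and> b 1 = c \<and>
     (\<forall>x\<in>{0..1}. D a x > 0 \<and> D b x < 0) \<and>
     (\<forall>x\<in>{0<..1}. D a x < 1 \<and> D b x > -1)"

definition class_DRI :: "real \<Rightarrow> (real \<Rightarrow> real) \<Rightarrow> (real \<Rightarrow> real) \<Rightarrow> bool" where
  "class_DRI c a b \<longleftrightarrow> class_DR c a b \<and> D a 0 = 1"

definition gbr :: "(real \<Rightarrow> real) \<Rightarrow> (real \<Rightarrow> real) \<Rightarrow> nat \<Rightarrow> real \<Rightarrow> real" where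
  "gbr a b m = (a ^^ (m - 1)) \<circ> b"

definition Gn :: "(real \<Rightarrow> real) \<Rightarrow> (real \<Rightarrow> real) \<Rightarrow> nat \<Rightarrow> (real \<Rightarrow> real) set" where
  "Gn a b n = {foldr (\<lambda>m f. gbr a b m \<circ> f) ms id | ms. length ms = n \<and> (\<forall>m\<in>set ms. 1 \<le> m)}"

definition eta :: "(real \<Rightarrow> real) \<Rightarrow> (real \<Rightarrow> real) \<Rightarrow> nat \<Rightarrow> real" where
  "eta a b n = Sup {\<bar>D g x\<bar> | g x. g \<in> Gn a b n \<and> x \<in> {0..1}}"

end

theory Submission
  imports Defs
begin

text \<open>Every branch maps [0,1] into itself with |derivative| at most 1, so every element of
  \<open>\<G>\<^sup>n\<close> does too, and \<open>\<eta>\<close> is submultiplicative: \<open>\<eta>\<^sub>n \<le> \<eta>\<^sub>2\<^sup>k \<eta>\<^sub>1\<^sup>j\<close> with \<open>n = 2k + j\<close>, \<open>j \<le> 1\<close>,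
  and \<open>\<eta>\<^sub>2 \<le> \<eta>\<^sub>1\<^sup>2\<close>. The only source of contraction is \<open>[c,1]\<close>, where \<open>|a'|\<close> and \<open>|b'|\<close> are bounded
  by some \<open>\<theta> < 1\<close> by compactness. Every \<open>g\<^sub>m\<close> passes through \<open>b\<close>, whose image is \<open>[c,1]\<close>; in
  \<open>g\<^sub>m \<circ> g\<^sub>k\<close> either \<open>k \<ge> 2\<close> and \<open>a'\<close> is evaluated on \<open>[c,1]\<close> inside \<open>g\<^sub>k\<close>, or \<open>k = 1\<close> and the
  outer \<open>b'\<close> is evaluated at \<open>b x \<in> [c,1]\<close>. Hence \<open>\<eta>\<^sub>2 \<le> \<theta>\<close>. Likewise \<open>\<eta>\<^sub>1 \<le> max |b'|\<close>, which
  is below 1 exactly when \<open>b'(0) > -1\<close>.\<close>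

lemma D_eqI:
  assumes "x \<in> {0..1}" "(f has_real_derivative d) (at x within {0..1})"
  shows "D f x = d"
  unfolding D_def
  using assms vector_derivative_within_closed_interval[of 0 1 x f d]
  by (simp add: has_real_derivative_iff_has_vector_derivative)

definition unit_nonexpanding :: "(real \<Rightarrow> real) \<Rightarrow> bool" where
  "unit_nonexpanding f \<longleftrightarrow> (\<forall>x\<in>{0..1}. f x \<in> {0..1} \<and>
     (f has_real_derivative D f x) (at x within {0..1}) \<and> \<bar>D f x\<bar> \<le> 1)"

lemma unit_nonexpandingD:
  assumes "unit_nonexpanding f" "x \<in> {0..1}"
  shows "f x \<in> {0..1}" "\<bar>D f x\<bar> \<le> 1"
  using assms unfolding unit_nonexpanding_def by auto

lemma unit_nonexpanding_id: "unit_nonexpanding id"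
  unfolding unit_nonexpanding_def using D_eqI[OF _ DERIV_ident] by (auto simp: id_def)

lemma
  assumes f: "unit_nonexpanding f" and g: "unit_nonexpanding g"
  shows D_comp: "x \<in> {0..1} \<Longrightarrow> D (f \<circ> g) x = D f (g x) * D g x"
    and unit_nonexpanding_comp: "unit_nonexpanding (f \<circ> g)"
proof -
  have chain: "((f \<circ> g) has_real_derivative D f (g x) * D g x) (at x within {0..1})"
    if x: "x \<in> {0..1}" for x
  proof -
    have "g ` {0..1} \<subseteq> {0..1}" "g x \<in> {0..1}"
      using g x unfolding unit_nonexpanding_def by auto
    then have "(f has_real_derivative D f (g x)) (at (g x) within g ` {0..1})"
      using f unfolding unit_nonexpanding_def by (meson DERIV_subset)
    moreover have "(g has_real_derivative D g x) (at x within {0..1})"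
      using g x unfolding unit_nonexpanding_def by auto
    ultimately show ?thesis by (rule DERIV_image_chain)
  qed
  show D: "D (f \<circ> g) x = D f (g x) * D g x" if "x \<in> {0..1}" for x
    using D_eqI[OF that chain[OF that]] .
  show "unit_nonexpanding (f \<circ> g)"
    unfolding unit_nonexpanding_def
  proof
    fix x :: real assume x: "x \<in> {0..1}"
    have "\<bar>D f (g x) * D g x\<bar> \<le> 1"
      using unit_nonexpandingD[OF f unit_nonexpandingD(1)[OF g x]] unit_nonexpandingD[OF g x]
      by (simp add: abs_mult mult_le_one)
    then show "(f \<circ> g) x \<in> {0..1} \<and> ((f \<circ> g) has_real_derivative D (f \<circ> g) x) (at x within {0..1})
        \<and> \<bar>D (f \<circ> g) x\<bar> \<le> 1"
      using chain[OF x] D[OF x] unit_nonexpandingD(1)[OF f unit_nonexpandingD(1)[OF g x]] by simp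
  qed
qed

lemma unit_nonexpanding_funpow:
  assumes "unit_nonexpanding f"
  shows "unit_nonexpanding (f ^^ k)"
proof (induction k)
  case 0
  show ?case using unit_nonexpanding_id by (simp only: funpow.simps)
next
  case (Suc k)
  show ?case unfolding funpow.simps by (rule unit_nonexpanding_comp[OF assms Suc.IH])
qed

lemma submultiplicative_decay:
  fixes e :: "nat \<Rightarrow> real"
  assumes submult: "\<And>p q. e (p + q) \<le> e p * e q"
    and nonneg: "\<And>n. 0 \<le> e n" and e1: "e 1 \<le> 1" and "2 \<le> n"
  shows "e n \<le> e 2 ^ (1 + (n - 2) div 2)"
  using \<open>2 \<le> n\<close>
proof (induction n rule: less_induct)
  case (less n)
  consider "n = 2" | "n = 3" | "n \<ge> 4" using less.prems by linarith
  then show ?case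
  proof cases
    case 2
    have "e n \<le> e 2 * e 1" using submult[of 2 1] 2 by simp
    also have "\<dots> \<le> e 2" using e1 nonneg[of 2] by (simp add: mult_left_le)
    finally show ?thesis using 2 by simp
  next
    case 3
    have "2 + (n - 2) = n" using 3 by simp
    then have "e n \<le> e 2 * e (n - 2)" using submult[of 2 "n - 2"] by simp
    also have "\<dots> \<le> e 2 * e 2 ^ (1 + (n - 2 - 2) div 2)"
      using less.IH[of "n - 2"] 3 nonneg[of 2] by (simp add: mult_left_mono)
    also have "\<dots> = e 2 ^ (1 + (n - 2) div 2)"
      using 3 by (simp add: div_if)
    finally show ?thesis .
  qed simp
qed

abbreviation branch_word :: "(real \<Rightarrow> real) \<Rightarrow> (real \<Rightarrow> real) \<Rightarrow> nat list \<Rightarrow> real \<Rightarrow> real" where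
  "branch_word a b ms \<equiv> foldr (\<lambda>m f. gbr a b m \<circ> f) ms id"

lemma branch_word_append:
  "branch_word a b (ms @ ns) = branch_word a b ms \<circ> branch_word a b ns"
  by (induction ms) (simp_all add: comp_assoc)

lemma Gn_split:
  assumes "g \<in> Gn a b (p + q)"
  obtains h k where "h \<in> Gn a b p" "k \<in> Gn a b q" "g = h \<circ> k"
proof -
  obtain ms where ms: "g = branch_word a b ms" "length ms = p + q" "\<forall>m\<in>set ms. 1 \<le> m"
    using assms unfolding Gn_def by auto
  have "g = branch_word a b (take p ms) \<circ> branch_word a b (drop p ms)"
    using ms(1) branch_word_append[of a b "take p ms" "drop p ms"] by simp
  moreover have "branch_word a b (take p ms) \<in> Gn a b p"
    unfolding Gn_def using ms(2,3)
    by (intro CollectI exI[of _ "take p ms"] conjI refl) (auto dest: in_set_takeD)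
  moreover have "branch_word a b (drop p ms) \<in> Gn a b q"
    unfolding Gn_def using ms(2,3)
    by (intro CollectI exI[of _ "drop p ms"] conjI refl) (auto dest: in_set_dropD)
  ultimately show ?thesis using that by blast
qed

lemma Gn_nonempty: "branch_word a b (replicate n 1) \<in> Gn a b n"
  unfolding Gn_def by (intro CollectI exI[of _ "replicate n 1"] conjI refl) auto

lemma Gn_oneE:
  assumes "g \<in> Gn a b 1"
  obtains m where "g = gbr a b m"
  using assms unfolding Gn_def by (auto simp: length_Suc_conv)

lemma gbr_in_Gn_one: "1 \<le> m \<Longrightarrow> gbr a b m \<in> Gn a b 1"
  unfolding Gn_def by (intro CollectI exI[of _ "[m]"]) auto

lemma Gn_twoE:
  assumes "g \<in> Gn a b 2"
  obtains m k where "1 \<le> k" "g = gbr a b m \<circ> gbr a b k"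
  using assms unfolding Gn_def by (auto simp: length_Suc_conv numeral_2_eq_2)

locale nonexpanding_branches =
  fixes a b :: "real \<Rightarrow> real"
  assumes nonexpanding_a: "unit_nonexpanding a"
    and nonexpanding_b: "unit_nonexpanding b"
begin

lemma nonexpanding_gbr: "unit_nonexpanding (gbr a b m)"
  unfolding gbr_def
  by (intro unit_nonexpanding_comp unit_nonexpanding_funpow nonexpanding_a nonexpanding_b)

lemma nonexpanding_Gn:
  assumes "g \<in> Gn a b n"
  shows "unit_nonexpanding g"
proof -
  have "unit_nonexpanding (branch_word a b ms)" for ms
  proof (induction ms)
    case (Cons m ms)
    have "branch_word a b (m # ms) = gbr a b m \<circ> branch_word a b ms" by simp
    then show ?case using unit_nonexpanding_comp[OF nonexpanding_gbr Cons.IH] by (simp only:)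
  qed (simp add: unit_nonexpanding_id[unfolded id_def])
  then show ?thesis using assms unfolding Gn_def by auto
qed

lemma abs_D_Gn_le_one: "g \<in> Gn a b n \<Longrightarrow> x \<in> {0..1} \<Longrightarrow> \<bar>D g x\<bar> \<le> 1"
  using unit_nonexpandingD(2)[OF nonexpanding_Gn] .

lemma eta_upper: "g \<in> Gn a b n \<Longrightarrow> x \<in> {0..1} \<Longrightarrow> \<bar>D g x\<bar> \<le> eta a b n"
  unfolding eta_def
  by (rule cSup_upper) (auto intro!: bdd_aboveI[of _ 1] simp: abs_D_Gn_le_one)

lemma eta_least:
  "(\<And>g x. g \<in> Gn a b n \<Longrightarrow> x \<in> {0..1} \<Longrightarrow> \<bar>D g x\<bar> \<le> B) \<Longrightarrow> eta a b n \<le> B"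
  unfolding eta_def by (rule cSup_least) (use Gn_nonempty in fastforce)+

lemma eta_nonneg: "0 \<le> eta a b n"
proof -
  have "\<bar>D (branch_word a b (replicate n 1)) 0\<bar> \<le> eta a b n"
    by (rule eta_upper[OF Gn_nonempty]) simp
  then show ?thesis by (rule order_trans[OF abs_ge_zero])
qed

lemma eta_le_one: "eta a b n \<le> 1"
  by (rule eta_least) (rule abs_D_Gn_le_one)

lemma eta_submultiplicative: "eta a b (p + q) \<le> eta a b p * eta a b q"
proof (rule eta_least)
  fix g and x :: real assume g: "g \<in> Gn a b (p + q)" and x: "x \<in> {0..1}"
  obtain h k where hk: "h \<in> Gn a b p" "k \<in> Gn a b q" "g = h \<circ> k"
    using Gn_split[OF g] .
  have kx: "k x \<in> {0..1}" using unit_nonexpandingD(1)[OF nonexpanding_Gn[OF hk(2)] x] .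
  have "\<bar>D g x\<bar> = \<bar>D h (k x)\<bar> * \<bar>D k x\<bar>"
    using hk(3) D_comp[OF nonexpanding_Gn[OF hk(1)] nonexpanding_Gn[OF hk(2)] x] by (simp add: abs_mult)
  also have "\<dots> \<le> eta a b p * eta a b q"
    using eta_upper[OF hk(1) kx] eta_upper[OF hk(2) x] eta_nonneg by (intro mult_mono) auto
  finally show "\<bar>D g x\<bar> \<le> eta a b p * eta a b q" .
qed

lemma eta_decay: "2 \<le> n \<Longrightarrow> eta a b n \<le> eta a b 2 ^ (1 + (n - 2) div 2)"
  by (rule submultiplicative_decay) (use eta_submultiplicative eta_nonneg eta_le_one in auto)

lemma eta_two_le_square: "eta a b 2 \<le> (eta a b 1)\<^sup>2"
  using eta_submultiplicative[of 1 1, unfolded one_add_one] by (simp add: power2_eq_square)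

lemma abs_D_gbr_le:
  assumes "x \<in> {0..1}"
  shows "\<bar>D (gbr a b m) x\<bar> \<le> \<bar>D b x\<bar>"
proof -
  have "D (gbr a b m) x = D (a ^^ (m - 1)) (b x) * D b x"
    unfolding gbr_def using D_comp[OF unit_nonexpanding_funpow[OF nonexpanding_a] nonexpanding_b assms] .
  moreover have "\<bar>D (a ^^ (m - 1)) (b x)\<bar> \<le> 1"
    using unit_nonexpandingD(2)[OF unit_nonexpanding_funpow[OF nonexpanding_a]
        unit_nonexpandingD(1)[OF nonexpanding_b assms]] .
  ultimately show ?thesis by (simp add: abs_mult mult_left_le_one_le)
qed

lemma abs_D_gbr_le_at_b:
  assumes "2 \<le> m" and x: "x \<in> {0..1}"
  shows "\<bar>D (gbr a b m) x\<bar> \<le> \<bar>D a (b x)\<bar>"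
proof -
  have "m - 1 = Suc (m - 2)" using assms(1) by simp
  then have gbr_eq: "gbr a b m = (a ^^ (m - 2) \<circ> a) \<circ> b"
    unfolding gbr_def by (simp only: funpow_Suc_right)
  have bx: "b x \<in> {0..1}" using unit_nonexpandingD(1)[OF nonexpanding_b x] .
  have pow: "unit_nonexpanding (a ^^ (m - 2))" by (rule unit_nonexpanding_funpow[OF nonexpanding_a])
  have "\<bar>D (gbr a b m) x\<bar> = \<bar>D (a ^^ (m - 2)) (a (b x))\<bar> * \<bar>D a (b x)\<bar> * \<bar>D b x\<bar>"
    unfolding gbr_eq
    using D_comp[OF unit_nonexpanding_comp[OF pow nonexpanding_a] nonexpanding_b x]
      D_comp[OF pow nonexpanding_a bx]
    by (simp add: abs_mult)
  also have "\<dots> \<le> 1 * \<bar>D a (b x)\<bar> * 1"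
    using unit_nonexpandingD(2)[OF pow unit_nonexpandingD(1)[OF nonexpanding_a bx]]
      unit_nonexpandingD(2)[OF nonexpanding_b x]
    by (intro mult_mono) auto
  finally show ?thesis by simp
qed

lemma eta_two_le:
  assumes "\<And>y. y \<in> b ` {0..1} \<Longrightarrow> \<bar>D a y\<bar> \<le> \<theta> \<and> \<bar>D b y\<bar> \<le> \<theta>"
  shows "eta a b 2 \<le> \<theta>"
proof (rule eta_least)
  fix g and x :: real assume g: "g \<in> Gn a b 2" and x: "x \<in> {0..1}"
  obtain m k where mk: "1 \<le> k" "g = gbr a b m \<circ> gbr a b k"
    using Gn_twoE[OF g] by blast
  have kx: "gbr a b k x \<in> {0..1}" using unit_nonexpandingD(1)[OF nonexpanding_gbr x] .
  have D_g: "\<bar>D g x\<bar> = \<bar>D (gbr a b m) (gbr a b k x)\<bar> * \<bar>D (gbr a b k) x\<bar>"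
    using mk(2) D_comp[OF nonexpanding_gbr nonexpanding_gbr x] by (simp add: abs_mult)
  have outer: "\<bar>D (gbr a b m) (gbr a b k x)\<bar> \<le> 1" and inner: "\<bar>D (gbr a b k) x\<bar> \<le> 1"
    using unit_nonexpandingD(2)[OF nonexpanding_gbr] kx x by auto
  show "\<bar>D g x\<bar> \<le> \<theta>"
  proof (cases "k = 1")
    case True
    then have "\<bar>D (gbr a b m) (gbr a b k x)\<bar> \<le> \<theta>"
      using abs_D_gbr_le[OF kx, of m] assms[of "b x"] x by (fastforce simp: gbr_def)
    then show ?thesis unfolding D_g using inner
      by (metis abs_ge_zero mult_right_le_one_le order_trans)
  next
    case False
    then have "\<bar>D (gbr a b k) x\<bar> \<le> \<theta>"
      using abs_D_gbr_le_at_b[of k x] assms[of "b x"] mk(1) x by fastforce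
    then show ?thesis unfolding D_g using outer
      by (metis abs_ge_zero mult_left_le_one_le order_trans)
  qed
qed

lemma eta_one_le:
  assumes "\<And>y. y \<in> {0..1} \<Longrightarrow> \<bar>D b y\<bar> \<le> \<theta>"
  shows "eta a b 1 \<le> \<theta>"
proof (rule eta_least)
  fix g and x :: real assume "g \<in> Gn a b 1" "x \<in> {0..1}"
  then show "\<bar>D g x\<bar> \<le> \<theta>"
    using assms abs_D_gbr_le by (elim Gn_oneE) (metis order_trans)
qed

lemma eta_one_ge: "\<bar>D b 0\<bar> \<le> eta a b 1"
  using eta_upper[OF gbr_in_Gn_one[of 1], of 0] by (simp add: gbr_def)

end

lemma continuous_bound_less_one:
  fixes h :: "real \<Rightarrow> real"
  assumes "compact S" "continuous_on S h" "\<And>y. y \<in> S \<Longrightarrow> h y < 1"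
  obtains \<theta> where "\<theta> < 1" "\<And>y. y \<in> S \<Longrightarrow> h y \<le> \<theta>"
proof (cases "S = {}")
  case False
  then obtain x where "x \<in> S" "\<And>y. y \<in> S \<Longrightarrow> h y \<le> h x"
    using continuous_attains_sup[OF assms(1) False assms(2)] by blast
  then show ?thesis using that assms(3) by blast
next
  case True
  then show ?thesis using that[of 0] by simp
qed

context
  fixes c :: real and a b :: "real \<Rightarrow> real"
  assumes DRI: "class_DRI c a b"
begin

lemma DRI_facts:
  shows c_pos: "0 < c"
    and b_image: "b ` {0..1} = {c..1}"
    and D_pos_neg: "x \<in> {0..1} \<Longrightarrow> 0 < D a x \<and> D b x < 0"
    and D_lt_one: "x \<in> {0<..1} \<Longrightarrow> D a x < 1 \<and> -1 < D b x"
    and D_a_zero: "D a 0 = 1"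
    and derivs: "x \<in> {0..1} \<Longrightarrow> (a has_real_derivative D a x) (at x within {0..1})"
      "x \<in> {0..1} \<Longrightarrow> (b has_real_derivative D b x) (at x within {0..1})"
    and continuous_D: "continuous_on {0..1} (D a)" "continuous_on {0..1} (D b)"
    and images: "a ` {0..1} \<subseteq> {0..1}" "b ` {0..1} \<subseteq> {0..1}"
  using DRI unfolding class_DRI_def class_DR_def binary_system_def C2_on_unit_def bij_betw_def
  by (auto intro: DERIV_continuous simp: continuous_on_eq_continuous_within)

lemma D_b_zero_ge: "-1 \<le> D b 0"
proof -
  have "(D b \<longlongrightarrow> D b 0) (at 0 within {0..1})"
    using continuous_D(2) by (simp add: continuous_on_def)
  then have "(D b \<longlongrightarrow> D b 0) (at_right 0)"
    by (simp add: at_within_Icc_at_right)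
  moreover have "eventually (\<lambda>x. -1 \<le> D b x) (at_right 0)"
    unfolding eventually_at_right_field using D_lt_one
    by (intro exI[of _ 1]) (auto simp: less_imp_le)
  ultimately show ?thesis by (rule tendsto_lowerbound) simp
qed

lemma DRI_nonexpanding_branches: "nonexpanding_branches a b"
proof
  have "\<bar>D a x\<bar> \<le> 1" "\<bar>D b x\<bar> \<le> 1" if "x \<in> {0..1}" for x
    using that D_pos_neg[OF that] D_lt_one[of x] D_a_zero D_b_zero_ge
    by (cases "x = 0"; force)+
  then show "unit_nonexpanding a" "unit_nonexpanding b"
    unfolding unit_nonexpanding_def using derivs images by auto
qed

interpretation nonexpanding_branches a b
  by (rule DRI_nonexpanding_branches)

lemma eta_two_less_one: "eta a b 2 < 1"
proof -
  have sub: "{c..1} \<subseteq> {0..1}" "{c..1} \<subseteq> {0<..1}" using c_pos by auto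
  have "continuous_on {c..1} (\<lambda>y. max \<bar>D a y\<bar> \<bar>D b y\<bar>)"
    using continuous_D by (intro continuous_intros continuous_on_subset[OF _ sub(1)])
  moreover have "max \<bar>D a y\<bar> \<bar>D b y\<bar> < 1" if "y \<in> {c..1}" for y
    using D_pos_neg[of y] D_lt_one[of y] sub that by auto
  ultimately obtain \<theta> where "\<theta> < 1" "\<And>y. y \<in> {c..1} \<Longrightarrow> max \<bar>D a y\<bar> \<bar>D b y\<bar> \<le> \<theta>"
    using continuous_bound_less_one[of "{c..1}"] by blast
  then show ?thesis
    using eta_two_le[of \<theta>] b_image by fastforce
qed

lemma eta_one_less_one:
  assumes "-1 < D b 0"
  shows "eta a b 1 < 1"
proof -
  have "\<bar>D b y\<bar> < 1" if "y \<in> {0..1}" for y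
    using that assms D_pos_neg[of y] D_lt_one[of y] by (cases "y = 0") auto
  then obtain \<theta> where "\<theta> < 1" "\<And>y. y \<in> {0..1} \<Longrightarrow> \<bar>D b y\<bar> \<le> \<theta>"
    using continuous_bound_less_one[of "{0..1}" "\<lambda>y. \<bar>D b y\<bar>"] continuous_on_rabs[OF continuous_D(2)]
    by auto
  then show ?thesis using eta_one_le[of \<theta>] by fastforce
qed

lemma eta_one_eq_one: "D b 0 = -1 \<Longrightarrow> eta a b 1 = 1"
  using eta_one_ge eta_le_one[of 1] by simp

end

theorem lemma7p3:
  fixes c :: real and a b :: "real \<Rightarrow> real"
  assumes "class_DRI c a b"
  shows "(D b 0 > -1 \<longrightarrow> eta a b 1 < 1)
     \<and> (D b 0 = -1 \<longrightarrow> eta a b 1 = 1 \<and> eta a b 2 < 1)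
     \<and> min ((eta a b 1)\<^sup>2) (eta a b 2) < 1
     \<and> (\<forall>n\<ge>2. eta a b n \<le> (min ((eta a b 1)\<^sup>2) (eta a b 2)) ^ (1 + (n - 2) div 2))"
proof -
  interpret nonexpanding_branches a b
    using DRI_nonexpanding_branches[OF assms] .
  have "min ((eta a b 1)\<^sup>2) (eta a b 2) = eta a b 2"
    using eta_two_le_square by simp
  then show ?thesis
    using eta_one_less_one[OF assms] eta_one_eq_one[OF assms] eta_two_less_one[OF assms] eta_decay
    by auto
qed

end
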